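(* Let $(D,\mathrm{left},\mathrm{right})$ be an interval poset with order $\sqsubseteq$, and let $\le$ be the relation on $\max(D)$ given by $a\le b$ iff $a=\mathrm{left}(z)$ and $b=\mathrm{right}(z)$ for some $z\in D$. Then for all $x,y\in D$, $$x\sqsubseteq y\iff \mathrm{left}(x)\le\mathrm{left}(y)\le\mathrm{right}(y)\le\mathrm{right}(x).$$
   Context: For a poset $(D,\sqsubseteq)$, $\max(D)$ is its set of maximal elements and $x\sqcap y$ denotes the infimum of $\{x,y\}$. An interval poset is a poset $D$ with two functions $\mathrm{left},\mathrm{right}:D\to\max(D)$ such that (only the infima named here are assumed to exist): (i) for all $x\in D$, $x=\mathrm{left}(x)\sqcap\mathrm{right}(x)$; (ii) for all $x,y\in D$, if $\mathrm{right}(x)=\mathrm{left}(y)$ then $x\sqcap y$ exists and $\mathrm{left}(x\sqcap y)=\mathrm{left}(x)$, $\mathrm{right}(x\sqcap y)=\mathrm{right}(y)$; (iii) for each $x\in D$ and each $p\in\max(D)$ with $x\sqsubseteq p$, the infima $\mathrm{left}(x)\sqcap p$ and $p\sqcap\mathrm{right}(x)$ exist and $\mathrm{left}(\mathrm{left}(x)\sqcap p)=\mathrm{left}(x)$, $\mathrm{right}(\mathrm{left}(x)\sqcap p)=p$, $\mathrm{left}(p\sqcap\mathrm{right}(x))=p$, $\mathrm{right}(p\sqcap\mathrm{right}(x))=\mathrm{right}(x)$. The relation $\le$ is a partial order on $\max(D)$. *)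

theory Defs
  imports Main
begin

definition partial_order_on' :: "'a set \<Rightarrow> ('a \<Rightarrow> 'a \<Rightarrow> bool) \<Rightarrow> bool" where
  "partial_order_on' D le \<longleftrightarrow>
     (\<forall>x\<in>D. le x x) \<and>
     (\<forall>x\<in>D. \<forall>y\<in>D. le x y \<and> le y x \<longrightarrow> x = y) \<and>
     (\<forall>x\<in>D. \<forall>y\<in>D. \<forall>z\<in>D. le x y \<and> le y z \<longrightarrow> le x z)"

definition is_inf :: "'a set \<Rightarrow> ('a \<Rightarrow> 'a \<Rightarrow> bool) \<Rightarrow> 'a \<Rightarrow> 'a \<Rightarrow> 'a \<Rightarrow> bool" where
  "is_inf D le x y m \<longleftrightarrow> m \<in> D \<and> le m x \<and> le m y \<and>
     (\<forall>z\<in>D. le z x \<and> le z y \<longrightarrow> le z m)"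

definition maxs :: "'a set \<Rightarrow> ('a \<Rightarrow> 'a \<Rightarrow> bool) \<Rightarrow> 'a set" where
  "maxs D le = {p \<in> D. \<forall>q\<in>D. le p q \<longrightarrow> q = p}"

definition interval_poset ::
  "'a set \<Rightarrow> ('a \<Rightarrow> 'a \<Rightarrow> bool) \<Rightarrow> ('a \<Rightarrow> 'a) \<Rightarrow> ('a \<Rightarrow> 'a) \<Rightarrow> bool" where
  "interval_poset D le left right \<longleftrightarrow>
     partial_order_on' D le \<and>
     (\<forall>x\<in>D. left x \<in> maxs D le \<and> right x \<in> maxs D le) \<and>
     (\<forall>x\<in>D. is_inf D le (left x) (right x) x) \<and>
     (\<forall>x\<in>D. \<forall>y\<in>D. right x = left y \<longrightarrow>
        (\<exists>m. is_inf D le x y m \<and> left m = left x \<and> right m = right y)) \<and>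
     (\<forall>x\<in>D. \<forall>p\<in>maxs D le. le x p \<longrightarrow>
        (\<exists>m. is_inf D le (left x) p m \<and> left m = left x \<and> right m = p) \<and>
        (\<exists>m. is_inf D le p (right x) m \<and> left m = p \<and> right m = right x))"

definition max_le :: "'a set \<Rightarrow> ('a \<Rightarrow> 'a) \<Rightarrow> ('a \<Rightarrow> 'a) \<Rightarrow> 'a \<Rightarrow> 'a \<Rightarrow> bool" where
  "max_le D left right a b \<longleftrightarrow> (\<exists>z\<in>D. a = left z \<and> b = right z)"

end

theory Submission
  imports Defs
begin

text \<open>An element of an interval poset is the infimum of its two endpoints, so it is
  determined by them. If x \<sqsubseteq> y then x lies below both endpoints of y, and axiom (iii)
  produces the intervals [left x, left y] and [right y, right x]. Conversely, gluing
  these two intervals to y with axiom (ii) yields an element below y with the same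
  endpoints as x, which must therefore be x itself.\<close>

lemma is_inf_unique:
  assumes "partial_order_on' D le" "is_inf D le a b m" "is_inf D le a b n"
  shows "m = n"
  using assms unfolding partial_order_on'_def is_inf_def by blast

lemma partial_order_on'_trans:
  assumes "partial_order_on' D le" "x \<in> D" "y \<in> D" "z \<in> D" "le x y" "le y z"
  shows "le x z"
  using assms unfolding partial_order_on'_def by blast

lemma maxs_subset: "maxs D le \<subseteq> D"
  unfolding maxs_def by blast

lemma is_inf_in_carrier: "is_inf D le a b m \<Longrightarrow> m \<in> D"
  unfolding is_inf_def by blast

lemma interval_poset_partial_order:
  "interval_poset D le left right \<Longrightarrow> partial_order_on' D le"
  unfolding interval_poset_def by blast

lemma interval_poset_is_inf_ends:
  "interval_poset D le left right \<Longrightarrow> x \<in> D \<Longrightarrow> is_inf D le (left x) (right x) x"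
  unfolding interval_poset_def by blast

lemma
  assumes "interval_poset D le left right" "x \<in> D"
  shows interval_poset_left_in_maxs: "left x \<in> maxs D le"
    and interval_poset_right_in_maxs: "right x \<in> maxs D le"
  using assms unfolding interval_poset_def by blast+

lemma
  assumes "interval_poset D le left right" "x \<in> D"
  shows interval_poset_le_left: "le x (left x)"
    and interval_poset_le_right: "le x (right x)"
  using interval_poset_is_inf_ends[OF assms] unfolding is_inf_def by blast+

lemma interval_poset_eqI:
  assumes ip: "interval_poset D le left right" and "x \<in> D" "y \<in> D"
    and "left x = left y" "right x = right y"
  shows "x = y"
proof (rule is_inf_unique)
  show "partial_order_on' D le"
    using ip by (rule interval_poset_partial_order)
  show "is_inf D le (left x) (right x) x"
    using ip \<open>x \<in> D\<close> by (rule interval_poset_is_inf_ends)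
  show "is_inf D le (left x) (right x) y"
    using interval_poset_is_inf_ends[OF ip \<open>y \<in> D\<close>] assms(4,5) by simp
qed

lemma interval_poset_glue:
  assumes "interval_poset D le left right" "x \<in> D" "y \<in> D" "right x = left y"
  obtains m where "m \<in> D" "le m x" "le m y" "left m = left x" "right m = right y"
proof -
  have "\<exists>m. is_inf D le x y m \<and> left m = left x \<and> right m = right y"
    using assms unfolding interval_poset_def by blast
  then obtain m where "is_inf D le x y m" "left m = left x" "right m = right y"
    by blast
  then show thesis
    using that unfolding is_inf_def by blast
qed

lemma max_leI: "z \<in> D \<Longrightarrow> left z = a \<Longrightarrow> right z = b \<Longrightarrow> max_le D left right a b"
  unfolding max_le_def by blast

lemma
  assumes "interval_poset D le left right" "x \<in> D" "p \<in> maxs D le" "le x p"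
  shows interval_poset_inf_left_max:
      "\<exists>m. is_inf D le (left x) p m \<and> left m = left x \<and> right m = p"
    and interval_poset_inf_max_right:
      "\<exists>m. is_inf D le p (right x) m \<and> left m = p \<and> right m = right x"
  using assms unfolding interval_poset_def by blast+

lemma interval_poset_le_max_imp_max_le:
  assumes "interval_poset D le left right" "x \<in> D" "p \<in> maxs D le" "le x p"
  shows "max_le D left right (left x) p" and "max_le D left right p (right x)"
proof -
  obtain m1 where "is_inf D le (left x) p m1" "left m1 = left x" "right m1 = p"
    using interval_poset_inf_left_max[OF assms] by blast
  then show "max_le D left right (left x) p"
    by (blast intro: max_leI is_inf_in_carrier)
  obtain m2 where "is_inf D le p (right x) m2" "left m2 = p" "right m2 = right x"
    using interval_poset_inf_max_right[OF assms] by blast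
  then show "max_le D left right p (right x)"
    by (blast intro: max_leI is_inf_in_carrier)
qed

lemma max_le_left_right: "x \<in> D \<Longrightarrow> max_le D left right (left x) (right x)"
  unfolding max_le_def by blast

lemma interval_poset_le_imp_max_le:
  assumes ip: "interval_poset D le left right" and x: "x \<in> D" and y: "y \<in> D"
    and "le x y"
  shows "max_le D left right (left x) (left y)"
    and "max_le D left right (right y) (right x)"
proof -
  note trans = partial_order_on'_trans[OF interval_poset_partial_order[OF ip] x y]
  have ly: "left y \<in> maxs D le" and ry: "right y \<in> maxs D le"
    using interval_poset_left_in_maxs[OF ip y] interval_poset_right_in_maxs[OF ip y] .
  have "le x (left y)"
    using trans[OF subsetD[OF maxs_subset ly] \<open>le x y\<close> interval_poset_le_left[OF ip y]] .
  then show "max_le D left right (left x) (left y)"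
    using interval_poset_le_max_imp_max_le(1)[OF ip x ly] by blast
  have "le x (right y)"
    using trans[OF subsetD[OF maxs_subset ry] \<open>le x y\<close> interval_poset_le_right[OF ip y]] .
  then show "max_le D left right (right y) (right x)"
    using interval_poset_le_max_imp_max_le(2)[OF ip x ry] by blast
qed

lemma interval_poset_max_le_imp_le:
  assumes ip: "interval_poset D le left right" and x: "x \<in> D" and y: "y \<in> D"
    and "max_le D left right (left x) (left y)"
    and "max_le D left right (right y) (right x)"
  shows "le x y"
proof -
  obtain z1 where z1: "z1 \<in> D" "left x = left z1" "left y = right z1"
    using assms(4) unfolding max_le_def by blast
  obtain z3 where z3: "z3 \<in> D" "right y = left z3" "right x = right z3"
    using assms(5) unfolding max_le_def by blast
  obtain w where w: "w \<in> D" "le w y" "left w = left x" "right w = right y"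
    using interval_poset_glue[OF ip z1(1) y] z1 by auto
  obtain v where v: "v \<in> D" "le v w" "left v = left x" "right v = right x"
    using interval_poset_glue[OF ip w(1) z3(1)] w z3 by auto
  have "v = x"
    using interval_poset_eqI[OF ip v(1) x] v by simp
  then show ?thesis
    using partial_order_on'_trans[OF interval_poset_partial_order[OF ip] v(1) w(1) y] v w
    by simp
qed

theorem mainTheorem7:
  assumes "interval_poset D le left right"
    and "x \<in> D" and "y \<in> D"
  shows "le x y \<longleftrightarrow>
    (max_le D left right (left x) (left y) \<and>
     max_le D left right (left y) (right y) \<and>
     max_le D left right (right y) (right x))"
  using interval_poset_le_imp_max_le[OF assms] interval_poset_max_le_imp_le[OF assms]
    max_le_left_right[OF assms(3)] by blast

end
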